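(* In the setting described in the context, suppose the degree marginal of $P$ has positive variance and $\widetilde{\mathrm{E}}[\theta]=\mathrm{E}[\theta]$. Then $x^{friend}(\theta_i,d_i)>x^{soc}(\theta_i,d_i)$ for all $(\theta_i,d_i)\in\Theta\times D$, and moreover $$\widetilde{\mathrm{E}}[x^{friend}(\theta,d)]>\mathrm{E}[x^{friend}(\theta,d)]>\mathrm{E}[x^{soc}(\theta,d)].$$
   Context: Fix an integer $n\ge 2$, parameters $a>0$, $c>0$, $\phi\in\mathbb{R}$, and a compact set $\Theta\subset[0,\infty)$ of types. Let $D=\{1,\dots,n-1\}$. Let $P$ be a probability distribution on $\Theta\times D$, the joint distribution of the type $\theta$ and degree $d$ of a generic potential neighbor, the same for every agent; $\mathrm{E}$ denotes expectation under $P$. The neighbor distribution $\widetilde P$ is defined by $\widetilde P(A\times\{d\})=\frac{d}{\mathrm{E}[d]}P(A\times\{d\})$, with expectation $\widetilde{\mathrm{E}}$, i.e. $\widetilde{\mathrm{E}}[h(\theta,d)]=\mathrm{E}[d\,h(\theta,d)]/\mathrm{E}[d]$. Standing assumptions: $P(\theta>0)>0$ and $c>a\,\widetilde{\mathrm{E}}[d]$. A strategy is a bounded measurable $x:\Theta\times D\to[0,\infty)$, used by all agents. If others use $x$, an agent of type $\theta_i$, degree $d_i$, choosing $y\ge0$ gets in the society-wide game $EU^{soc}(y;\theta_i,d_i;x)=\theta_i y+a y d_i\mathrm{E}[x(\theta,d)]-\frac{c}{2}y^2+\phi(n-1)\mathrm{E}[x(\theta,d)]$, and in the friend game $EU^{friend}(y;\theta_i,d_i;x)=\theta_i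 y+a y d_i\widetilde{\mathrm{E}}[x(\theta,d)]-\frac{c}{2}y^2+\phi(n-1)\mathrm{E}[x(\theta,d)]$. A Bayesian equilibrium of a game is a strategy $x$ such that for every $(\theta_i,d_i)$, $x(\theta_i,d_i)$ maximizes that game's payoff over $y\ge0$ given others use $x$. Under the standing assumptions each game has a unique Bayesian equilibrium; $x^{soc}$ denotes that of the society-wide game and $x^{friend}$ that of the friend game. *)

theory Defs
  imports "HOL-Probability.Probability"
begin

text \<open>Types theta are reals, degrees are naturals. P is a probability measure M on
  real \<times> nat (product of Borel and counting sigma-algebra) concentrated on Theta \<times> D.\<close>

definition Dset :: "nat \<Rightarrow> nat set" where
  "Dset n = {1..n-1}"

definition EP :: "(real \<times> nat) measure \<Rightarrow> (real \<times> nat \<Rightarrow> real) \<Rightarrow> real" where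
  "EP M h = (\<integral>z. h z \<partial>M)"

text \<open>Expectation under the neighbor distribution: E[d h]/E[d].\<close>
definition EN :: "(real \<times> nat) measure \<Rightarrow> (real \<times> nat \<Rightarrow> real) \<Rightarrow> real" where
  "EN M h = EP M (\<lambda>z. real (snd z) * h z) / EP M (\<lambda>z. real (snd z))"

definition EU_soc :: "(real \<times> nat) measure \<Rightarrow> nat \<Rightarrow> real \<Rightarrow> real \<Rightarrow> real
    \<Rightarrow> real \<Rightarrow> real \<Rightarrow> nat \<Rightarrow> (real \<times> nat \<Rightarrow> real) \<Rightarrow> real" where
  "EU_soc M n a c \<phi> y \<theta>i di x =
     \<theta>i * y + a * y * real di * EP M x - c / 2 * y\<^sup>2 + \<phi> * (real n - 1) * EP M x"

definition EU_friend :: "(real \<times> nat) measure \<Rightarrow> nat \<Rightarrow> real \<Rightarrow> real \<Rightarrow> real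
    \<Rightarrow> real \<Rightarrow> real \<Rightarrow> nat \<Rightarrow> (real \<times> nat \<Rightarrow> real) \<Rightarrow> real" where
  "EU_friend M n a c \<phi> y \<theta>i di x =
     \<theta>i * y + a * y * real di * EN M x - c / 2 * y\<^sup>2 + \<phi> * (real n - 1) * EP M x"

definition strategy :: "(real \<times> nat) measure \<Rightarrow> real set \<Rightarrow> nat \<Rightarrow> (real \<times> nat \<Rightarrow> real) \<Rightarrow> bool" where
  "strategy M \<Theta> n x \<longleftrightarrow> x \<in> borel_measurable M \<and>
     (\<exists>B. \<forall>z \<in> \<Theta> \<times> Dset n. \<bar>x z\<bar> \<le> B) \<and> (\<forall>z \<in> \<Theta> \<times> Dset n. 0 \<le> x z)"

definition bayes_eq :: "(real \<Rightarrow> real \<Rightarrow> nat \<Rightarrow> (real \<times> nat \<Rightarrow> real) \<Rightarrow> real)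
    \<Rightarrow> (real \<times> nat) measure \<Rightarrow> real set \<Rightarrow> nat \<Rightarrow> (real \<times> nat \<Rightarrow> real) \<Rightarrow> bool" where
  "bayes_eq EU M \<Theta> n x \<longleftrightarrow> strategy M \<Theta> n x \<and>
     (\<forall>\<theta>i \<in> \<Theta>. \<forall>di \<in> Dset n. \<forall>y \<ge> 0. EU y \<theta>i di x \<le> EU (x (\<theta>i, di)) \<theta>i di x)"

end

theory Submission
  imports Defs
begin

text \<open>In both games the best response is affine, x(\<theta>, d) = (\<theta> + a d m)/c, where m is the
  aggregate the agent responds to: E[x] in the society-wide game, the neighbour mean of x in the
  friend game. Averaging the best response with the matching weights gives the fixed point
  m = E[\<theta>]/(c - a e), with e = E[d] resp. the neighbour mean of d. By the friendship paradox
  (positive degree variance) the neighbour mean of d exceeds E[d]; hence the friend aggregate is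
  larger, every agent (degree at least 1) plays more, and the neighbour mean of the friend-game
  equilibrium exceeds its plain mean.\<close>

abbreviation deg :: "real \<times> nat \<Rightarrow> real" where
  "deg z \<equiv> real (snd z)"

lemma quadratic_argmax_unique:
  fixes c B x :: real
  assumes c: "c > 0" and le: "B * (B / c) - c / 2 * (B / c)\<^sup>2 \<le> B * x - c / 2 * x\<^sup>2"
  shows "x = B / c"
proof -
  have "c / 2 * (x - B / c)\<^sup>2 = (B * (B / c) - c / 2 * (B / c)\<^sup>2) - (B * x - c / 2 * x\<^sup>2)"
    using c by (simp add: field_simps power2_eq_square)
  also have "\<dots> \<le> 0" using le by simp
  finally have "(x - B / c)\<^sup>2 = 0"
    using c by (simp add: mult_le_0_iff)
  then show ?thesis by simp
qed

lemma bayes_eq_affine_best_response: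
  fixes EU :: "real \<Rightarrow> real \<Rightarrow> nat \<Rightarrow> (real \<times> nat \<Rightarrow> real) \<Rightarrow> real"
  assumes eq: "bayes_eq EU M \<Theta> n x"
    and c: "c > 0" and a: "a \<ge> 0" and m: "m \<ge> 0" and \<Theta>: "\<Theta> \<subseteq> {0..}"
    and payoff: "\<And>y \<theta> d. EU y \<theta> d x = (\<theta> + a * real d * m) * y - c / 2 * y\<^sup>2 + K"
  shows "\<forall>z \<in> \<Theta> \<times> Dset n. x z = (fst z + a * deg z * m) / c"
proof
  fix z assume "z \<in> \<Theta> \<times> Dset n"
  then obtain \<theta> d where z: "z = (\<theta>, d)" "\<theta> \<in> \<Theta>" "d \<in> Dset n" by auto
  define B where "B = \<theta> + a * real d * m"
  have "B / c \<ge> 0" using z \<Theta> a m c by (auto simp: B_def)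
  then have "EU (B / c) \<theta> d x \<le> EU (x (\<theta>, d)) \<theta> d x"
    using eq z unfolding bayes_eq_def by blast
  then have "x (\<theta>, d) = B / c"
    by (intro quadratic_argmax_unique[OF c]) (simp add: payoff B_def)
  then show "x z = (fst z + a * deg z * m) / c" using z by (simp add: B_def)
qed

lemma fixed_point_aggregate:
  fixes a c e m \<mu> :: real
  assumes "c > 0" and "c > a * e" and "m = (\<mu> + a * e * m) / c"
  shows "m = \<mu> / (c - a * e)"
proof -
  have "c \<noteq> 0" "c - a * e \<noteq> 0" using assms(1,2) by auto
  with assms(3) show ?thesis by (simp add: field_simps)
qed

locale type_degree_distribution = prob_space M for M :: "(real \<times> nat) measure" +
  fixes \<Theta> :: "real set" and n :: nat
  assumes sets_M: "sets M = sets (borel \<Otimes>\<^sub>M count_space UNIV)"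
    and compact_\<Theta>: "compact \<Theta>" and \<Theta>_nonneg: "\<Theta> \<subseteq> {0..}"
    and support: "measure M (\<Theta> \<times> Dset n) = 1"
begin

lemma AE_support: "AE z in M. z \<in> \<Theta> \<times> Dset n"
  using AE_prob_1 support by simp

lemma borel_measurable_M:
  "borel_measurable M = borel_measurable (borel \<Otimes>\<^sub>M count_space UNIV)"
  by (rule measurable_cong_sets[OF sets_M refl])

lemma borel_measurable_fst [measurable]: "fst \<in> borel_measurable M"
  unfolding borel_measurable_M by measurable

lemma borel_measurable_deg [measurable]: "deg \<in> borel_measurable M"
  unfolding borel_measurable_M by measurable

lemma bounded_\<Theta>: obtains B where "\<And>t. t \<in> \<Theta> \<Longrightarrow> 0 \<le> t \<and> t \<le> B"
  using compact_imp_bounded[OF compact_\<Theta>] \<Theta>_nonneg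
  by (auto simp: bounded_iff) (meson abs_ge_self order.trans subsetD atLeast_iff)

lemma deg_bounds: "z \<in> \<Theta> \<times> Dset n \<Longrightarrow> 1 \<le> deg z \<and> deg z \<le> real n"
  by (auto simp: Dset_def)

lemma integrable_bounded_on_support:
  fixes K :: real
  assumes "f \<in> borel_measurable M" and "\<And>z. z \<in> \<Theta> \<times> Dset n \<Longrightarrow> \<bar>f z\<bar> \<le> K"
  shows "integrable M f"
  using assms AE_support by (intro integrable_const_bound[where B = K]) auto

lemma integrable_deg_times:
  fixes K :: real
  assumes "f \<in> borel_measurable M" and "\<And>z. z \<in> \<Theta> \<times> Dset n \<Longrightarrow> \<bar>f z\<bar> \<le> K"
  shows "integrable M f" and "integrable M (\<lambda>z. deg z * f z)"
proof -
  show "integrable M f" using assms by (rule integrable_bounded_on_support)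
  have "\<bar>deg z * f z\<bar> \<le> real n * K" if "z \<in> \<Theta> \<times> Dset n" for z
    using deg_bounds[OF that] assms(2)[OF that] by (auto simp: abs_mult intro!: mult_mono)
  with assms(1) show "integrable M (\<lambda>z. deg z * f z)"
    by (intro integrable_bounded_on_support) auto
qed

lemma integrable_fst: "integrable M fst" and integrable_deg_fst: "integrable M (\<lambda>z. deg z * fst z)"
proof -
  obtain B where "\<And>t. t \<in> \<Theta> \<Longrightarrow> 0 \<le> t \<and> t \<le> B" using bounded_\<Theta> by blast
  then have "\<And>z. z \<in> \<Theta> \<times> Dset n \<Longrightarrow> \<bar>fst z\<bar> \<le> B" by fastforce
  then show "integrable M fst" "integrable M (\<lambda>z. deg z * fst z)"
    using integrable_deg_times[OF borel_measurable_fst] by blast+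
qed

lemma integrable_deg: "integrable M deg" and integrable_deg_deg: "integrable M (\<lambda>z. deg z * deg z)"
  using integrable_deg_times[OF borel_measurable_deg, of "real n"] deg_bounds by auto

lemma EP_deg_ge_1: "EP M deg \<ge> 1"
proof -
  have "(\<integral>z. 1 \<partial>M) \<le> (\<integral>z. deg z \<partial>M)"
    using integrable_deg AE_support deg_bounds by (intro integral_mono_AE) auto
  then show ?thesis by (simp add: EP_def prob_space)
qed

lemma EP_strategy_nonneg: "strategy M \<Theta> n x \<Longrightarrow> EP M x \<ge> 0"
  unfolding EP_def strategy_def using AE_support by (intro integral_nonneg_AE) auto

lemma EN_strategy_nonneg:
  assumes "strategy M \<Theta> n x"
  shows "EN M x \<ge> 0"
proof -
  have "EP M (\<lambda>z. deg z * x z) \<ge> 0"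
    using assms AE_support deg_bounds unfolding EP_def strategy_def
    by (intro integral_nonneg_AE) auto
  then show ?thesis using EP_deg_ge_1 by (simp add: EN_def)
qed

lemma EP_fst_pos:
  assumes pos: "measure M {z. fst z > 0} > 0"
  shows "EP M fst > 0"
proof -
  have nonneg: "AE z in M. 0 \<le> fst z"
    using AE_support by (rule eventually_mono) (use \<Theta>_nonneg in auto)
  have "EP M fst \<noteq> 0"
  proof
    assume "EP M fst = 0"
    then have "AE z in M. fst z = 0"
      using integral_nonneg_eq_0_iff_AE[OF integrable_fst nonneg] by (simp add: EP_def)
    then have "prob {z \<in> space M. fst z > 0} = 0"
      by (intro prob_eq_0_AE) auto
    moreover have "space M = UNIV"
      using sets_eq_imp_space_eq[OF sets_M] by (simp add: space_pair_measure)
    ultimately show False using pos by simp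
  qed
  moreover have "EP M fst \<ge> 0" unfolding EP_def using nonneg by (rule integral_nonneg_AE)
  ultimately show ?thesis by simp
qed

lemma EN_deg_gt_EP_deg:
  assumes "variance deg > 0"
  shows "EN M deg > EP M deg"
proof -
  have "variance deg = expectation (\<lambda>z. (deg z)\<^sup>2) - (expectation deg)\<^sup>2"
    using integrable_deg integrable_deg_deg by (intro variance_eq) (simp_all add: power2_eq_square)
  with assms have "EP M (\<lambda>z. deg z * deg z) > EP M deg * EP M deg"
    by (simp add: EP_def power2_eq_square)
  then show ?thesis using EP_deg_ge_1 by (simp add: EN_def field_simps)
qed

context
  fixes x :: "real \<times> nat \<Rightarrow> real" and a c m :: real
  assumes x_meas: "x \<in> borel_measurable M"
    and x_affine: "\<forall>z \<in> \<Theta> \<times> Dset n. x z = (fst z + a * deg z * m) / c"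
begin

lemma EP_affine_strategy: "EP M x = (EP M fst + a * EP M deg * m) / c"
proof -
  have "(\<integral>z. x z \<partial>M) = (\<integral>z. (fst z + a * deg z * m) / c \<partial>M)"
    using x_meas x_affine AE_support by (intro integral_cong_AE) auto
  also have "\<dots> = (EP M fst + a * EP M deg * m) / c"
    using integrable_fst integrable_deg by (simp add: EP_def)
  finally show ?thesis by (simp add: EP_def)
qed

lemma EN_affine_strategy: "EN M x = (EN M fst + a * EN M deg * m) / c"
proof -
  have "(\<integral>z. deg z * x z \<partial>M)
      = (\<integral>z. (deg z * fst z + (a * m) * (deg z * deg z)) / c \<partial>M)"
    using x_meas x_affine AE_support by (intro integral_cong_AE) (auto simp: field_simps)
  also have "\<dots> = (EP M (\<lambda>z. deg z * fst z) + a * EP M (\<lambda>z. deg z * deg z) * m) / c"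
    using integrable_deg_fst integrable_deg_deg by (simp add: EP_def)
  finally show ?thesis by (simp add: EN_def EP_def add_divide_distrib mult.commute)
qed

end

end

theorem proposition1:
  fixes n :: nat and a c \<phi> :: real and \<Theta> :: "real set"
    and M :: "(real \<times> nat) measure" and xs xf :: "real \<times> nat \<Rightarrow> real"
  assumes n: "n \<ge> 2" and a: "a > 0" and c: "c > 0"
    and \<Theta>: "compact \<Theta>" "\<Theta> \<subseteq> {0..}"
    and M: "prob_space M" "sets M = sets (borel \<Otimes>\<^sub>M count_space UNIV)"
    and supp: "measure M (\<Theta> \<times> Dset n) = 1"
    and pos: "measure M {z. fst z > 0} > 0"
    and std: "c > a * EN M (\<lambda>z. real (snd z))"
    and var: "prob_space.variance M (\<lambda>z. real (snd z)) > 0"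
    and theta: "EN M fst = EP M fst"
    and soc: "bayes_eq (EU_soc M n a c \<phi>) M \<Theta> n xs"
    and fr: "bayes_eq (EU_friend M n a c \<phi>) M \<Theta> n xf"
  shows "(\<forall>\<theta>i \<in> \<Theta>. \<forall>di \<in> Dset n. xf (\<theta>i, di) > xs (\<theta>i, di))
         \<and> EN M xf > EP M xf \<and> EP M xf > EP M xs"
proof -
  interpret type_degree_distribution M \<Theta> n
    unfolding type_degree_distribution_def type_degree_distribution_axioms_def
    using M \<Theta> supp by blast
  define \<mu> ms mf where "\<mu> = EP M fst" and "ms = EP M xs" and "mf = EN M xf"
  have strats: "strategy M \<Theta> n xs" "strategy M \<Theta> n xf"
    using soc fr by (auto simp: bayes_eq_def)
  have xs_affine: "\<forall>z \<in> \<Theta> \<times> Dset n. xs z = (fst z + a * deg z * ms) / c"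
    using EP_strategy_nonneg[OF strats(1)]
    by (intro bayes_eq_affine_best_response[OF soc c _ _ \<Theta>(2), where K = "\<phi> * (real n - 1) * ms"])
      (use a in \<open>simp_all add: EU_soc_def ms_def algebra_simps\<close>)
  have xf_affine: "\<forall>z \<in> \<Theta> \<times> Dset n. xf z = (fst z + a * deg z * mf) / c"
    using EN_strategy_nonneg[OF strats(2)]
    by (intro bayes_eq_affine_best_response[OF fr c _ _ \<Theta>(2), where K = "\<phi> * (real n - 1) * EP M xf"])
      (use a in \<open>simp_all add: EU_friend_def mf_def algebra_simps\<close>)
  have meas: "xs \<in> borel_measurable M" "xf \<in> borel_measurable M"
    using strats by (auto simp: strategy_def)
  have ms_fixed: "ms = (\<mu> + a * EP M deg * ms) / c"
    using EP_affine_strategy[OF meas(1) xs_affine] by (simp only: ms_def[symmetric] \<mu>_def[symmetric])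
  have mf_fixed: "mf = (\<mu> + a * EN M deg * mf) / c"
    using EN_affine_strategy[OF meas(2) xf_affine] theta
    by (simp only: mf_def[symmetric] \<mu>_def[symmetric])
  have EP_xf: "EP M xf = (\<mu> + a * EP M deg * mf) / c"
    using EP_affine_strategy[OF meas(2) xf_affine] by (simp only: \<mu>_def[symmetric])
  have paradox: "a * EP M deg < a * EN M deg" using EN_deg_gt_EP_deg[OF var] a by simp
  have mf_gt_ms: "mf > ms"
  proof -
    have "ms = \<mu> / (c - a * EP M deg)"
      using std paradox ms_fixed by (intro fixed_point_aggregate[OF c]) simp_all
    moreover have "mf = \<mu> / (c - a * EN M deg)"
      using std mf_fixed by (intro fixed_point_aggregate[OF c]) simp_all
    ultimately show ?thesis
      using EP_fst_pos[OF pos] std paradox by (simp add: \<mu>_def divide_strict_left_mono)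
  qed
  have mf_pos: "mf > 0" using mf_gt_ms EP_strategy_nonneg[OF strats(1)] by (simp add: ms_def)
  have "\<forall>\<theta>i \<in> \<Theta>. \<forall>di \<in> Dset n. xf (\<theta>i, di) > xs (\<theta>i, di)"
  proof (intro ballI)
    fix \<theta>i di assume "\<theta>i \<in> \<Theta>" "di \<in> Dset n"
    then have z: "(\<theta>i, di) \<in> \<Theta> \<times> Dset n" and "real di \<ge> 1" using deg_bounds by auto
    then have "a * real di * ms < a * real di * mf" using a mf_gt_ms by simp
    then show "xf (\<theta>i, di) > xs (\<theta>i, di)"
      using xs_affine xf_affine z c by (simp add: divide_strict_right_mono)
  qed
  moreover have "EN M xf > EP M xf"
  proof -
    have "EP M xf = (\<mu> + a * EP M deg * mf) / c" by (fact EP_xf)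
    also have "\<dots> < (\<mu> + a * EN M deg * mf) / c"
      using mult_strict_right_mono[OF paradox mf_pos] c by (simp add: divide_strict_right_mono)
    also have "\<dots> = EN M xf" using mf_fixed by (simp add: mf_def)
    finally show ?thesis .
  qed
  moreover have "EP M xf > EP M xs"
  proof -
    have "a * EP M deg * ms < a * EP M deg * mf" using a EP_deg_ge_1 mf_gt_ms by simp
    then have "(\<mu> + a * EP M deg * ms) / c < (\<mu> + a * EP M deg * mf) / c"
      using c by (simp add: divide_strict_right_mono)
    then show ?thesis using ms_fixed EP_xf by (simp add: ms_def)
  qed
  ultimately show ?thesis by blast
qed

end
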